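(* Let $\mathcal P$, $\mathcal J$, $\mathcal P_0$ and $\pi$ be as in the context, with $d$-dimensional Minkowski space, $d>2$. Let $\sigma:\mathcal P_0\to\mathcal P$ be a section satisfying: (i) $\pi\circ\sigma=\mathrm{id}$; (ii) $\sigma$ is an algebra homomorphism; (iii) $\sigma\pi$ commutes with Lorentz transformations; (iv) $\sigma\pi(\mathcal P_1)\subset\mathcal P_1$; (v) $\sigma\pi$ does not increase mass dimension. Then $\sigma\pi(\varphi)=\varphi$, $\sigma\pi(\partial^\mu\varphi)=\partial^\mu\varphi$, and $$\sigma\pi(\partial^\mu\partial^\nu\varphi)=\partial^\mu\partial^\nu\varphi-\frac{1}{d}g^{\mu\nu}(\square+m^2)\varphi.$$
   Context: Let $\varphi$ be a real scalar field of mass $m$ on $d$-dimensional Minkowski space with metric $g^{\mu\nu}$. $\mathcal P$ is the free commutative algebra generated by the symbols $\partial^a\varphi$, $a\in\mathbb N_0^d$, with derivatives $\partial^\mu$ acting as derivations. $\mathcal J=\{\sum_aA_a\,\partial^a(\square+m^2)\varphi:\ A_a\in\mathcal P\}$ is the ideal generated by the free field equation. $\mathcal P_0=\mathcal P/\mathcal J$, $\pi:\mathcal P\to\mathcal P_0$ is the canonical surjection, and $\partial^\mu\pi(B):=\pi(\partial^\mu B)$. $\mathcal P_1\subset\mathcal P$ is the subspace of fields linear in the $\partial^a\varphi$. The mass dimension of $\partial^a\varphi$ is $(d-2)/2+|a|$, extended additively to monomials. Lorentz transformations act on $\mathcal P$ through the tensor indices of the derivatives. *)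

theory Defs
  imports "HOL-Analysis.Analysis" "HOL-Library.Poly_Mapping" "HOL-Algebra.QuotRing"
begin

text \<open>Spacetime indices range over a finite type 'd, with d = CARD('d).
  A multi-index a in N_0^d is a function 'd => nat (a mu = number of derivatives d^mu).
  A monomial in the symbols d^a phi is a finitely supported map (multi-index => exponent);
  a field (element of P) is a finitely supported map (monomial => real coefficient).\<close>

type_synonym 'd mi = "'d \<Rightarrow> nat"
type_synonym 'd mon = "'d mi \<Rightarrow>\<^sub>0 nat"
type_synonym 'd fld = "'d mon \<Rightarrow>\<^sub>0 real"

definition dphi :: "'d mi \<Rightarrow> 'd fld" where
  "dphi a = Poly_Mapping.single (Poly_Mapping.single a 1) 1"

definition mi0 :: "'d mi" where "mi0 = (\<lambda>_. 0)"

definition emi :: "'d \<Rightarrow> 'd mi" where "emi \<mu> = (\<lambda>\<nu>. if \<nu> = \<mu> then 1 else 0)"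

definition miadd :: "'d mi \<Rightarrow> 'd mi \<Rightarrow> 'd mi" where "miadd a b = (\<lambda>\<nu>. a \<nu> + b \<nu>)"

definition smult :: "real \<Rightarrow> ('a \<Rightarrow>\<^sub>0 real) \<Rightarrow> ('a \<Rightarrow>\<^sub>0 real)" where
  "smult c p = Poly_Mapping.map (\<lambda>x. c * x) p"

definition monom1 :: "('v \<Rightarrow>\<^sub>0 nat) \<Rightarrow> (('v \<Rightarrow>\<^sub>0 nat) \<Rightarrow>\<^sub>0 real)" where
  "monom1 n = Poly_Mapping.single n 1"

definition subst :: "('v \<Rightarrow> 'w fld) \<Rightarrow> (('v \<Rightarrow>\<^sub>0 nat) \<Rightarrow>\<^sub>0 real) \<Rightarrow> 'w fld" where
  "subst f p = (\<Sum>n\<in>Poly_Mapping.keys p.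
      smult (Poly_Mapping.lookup p n) (\<Prod>v\<in>Poly_Mapping.keys n. f v ^ Poly_Mapping.lookup n v))"

text \<open>The unique (real-linear) derivation of P sending the generator d^a phi to f a.\<close>
definition derivation :: "('d mi \<Rightarrow> 'd fld) \<Rightarrow> 'd fld \<Rightarrow> 'd fld" where
  "derivation f p = (\<Sum>n\<in>Poly_Mapping.keys p. smult (Poly_Mapping.lookup p n)
      (\<Sum>v\<in>Poly_Mapping.keys n. smult (real (Poly_Mapping.lookup n v))
          (monom1 (n - Poly_Mapping.single v 1) * f v)))"

definition pd :: "'d \<Rightarrow> 'd fld \<Rightarrow> 'd fld" where
  "pd \<mu> = derivation (\<lambda>a. dphi (miadd a (emi \<mu>)))"

text \<open>Minkowski metric g^{mu nu} = diag(+1,-1,...,-1), the time direction being t :: 'd.\<close>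
definition mink :: "'d \<Rightarrow> 'd \<Rightarrow> 'd \<Rightarrow> real" where
  "mink t \<mu> \<nu> = (if \<mu> \<noteq> \<nu> then 0 else if \<mu> = t then 1 else -1)"

definition KG :: "'d \<Rightarrow> real \<Rightarrow> 'd fld" where
  "KG t m = (\<Sum>\<mu>\<in>UNIV. \<Sum>\<nu>\<in>UNIV. smult (mink t \<mu> \<nu>) (pd \<mu> (pd \<nu> (dphi mi0))))
            + smult (m ^ 2) (dphi mi0)"

inductive_set KGders :: "'d \<Rightarrow> real \<Rightarrow> 'd fld set" for t m where
  base: "KG t m \<in> KGders t m"
| step: "p \<in> KGders t m \<Longrightarrow> pd \<mu> p \<in> KGders t m"

definition PR :: "'d fld ring" where
  "PR = \<lparr>carrier = UNIV, monoid.mult = (*), one = 1, zero = 0, add = (+)\<rparr>"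

definition Jid :: "'d \<Rightarrow> real \<Rightarrow> 'd fld set" where
  "Jid t m = genideal PR (KGders t m)"

definition P0 :: "'d \<Rightarrow> real \<Rightarrow> 'd fld set ring" where
  "P0 t m = PR Quot (Jid t m)"

definition proj :: "'d \<Rightarrow> real \<Rightarrow> 'd fld \<Rightarrow> 'd fld set" where
  "proj t m p = Jid t m +>\<^bsub>PR\<^esub> p"

definition P1 :: "'d fld set" where
  "P1 = {p. \<forall>n\<in>Poly_Mapping.keys p. \<exists>a. n = Poly_Mapping.single a 1}"

definition mdim_mi :: "'d mi \<Rightarrow> real" where
  "mdim_mi a = (real CARD('d) - 2) / 2 + real (\<Sum>\<mu>\<in>UNIV. a \<mu>)"

definition mdim :: "'d mon \<Rightarrow> real" where
  "mdim n = (\<Sum>a\<in>Poly_Mapping.keys n. real (Poly_Mapping.lookup n a) * mdim_mi a)"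

definition lorentz :: "'d::finite \<Rightarrow> (real^'d^'d) set" where
  "lorentz t = {L. (\<forall>\<mu> \<nu>. (\<Sum>\<rho>\<in>UNIV. L $ \<rho> $ \<mu> * mink t \<rho> \<rho> * L $ \<rho> $ \<nu>) = mink t \<mu> \<nu>)
                   \<and> det L = 1 \<and> L $ t $ t \<ge> 1}"

text \<open>Image of d^a phi: d^{mu_1}...d^{mu_k} phi |-> L^{mu_1}_{nu_1}...L^{mu_k}_{nu_k} d^{nu_1}...d^{nu_k} phi,
  computed in the commutative polynomial ring in the formal symbols d^nu (variables 'd).\<close>
definition lgen_sym :: "real^'d^'d \<Rightarrow> 'd mi \<Rightarrow> (('d \<Rightarrow>\<^sub>0 nat) \<Rightarrow>\<^sub>0 real)" where
  "lgen_sym L a = (\<Prod>\<mu>\<in>UNIV. (\<Sum>\<nu>\<in>UNIV. smult (L $ \<mu> $ \<nu>) (monom1 (Poly_Mapping.single \<nu> 1))) ^ a \<mu>)"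

definition sym_to_field :: "(('d \<Rightarrow>\<^sub>0 nat) \<Rightarrow>\<^sub>0 real) \<Rightarrow> 'd fld" where
  "sym_to_field q = (\<Sum>b\<in>Poly_Mapping.keys q. smult (Poly_Mapping.lookup q b) (dphi (Poly_Mapping.lookup b)))"

definition lact :: "real^'d^'d \<Rightarrow> 'd fld \<Rightarrow> 'd fld" where
  "lact L = subst (\<lambda>a. sym_to_field (lgen_sym L a))"

end

theory Submission
  imports Defs
begin

(* Substituting k^a for d^a phi, i.e. evaluating a field on the exponential solution with
   momentum k, is a ring homomorphism P -> R; when g(k,k) + m^2 = 0 it kills (box + m^2) phi
   and all its derivatives, hence J. On a three-dimensional subspace through the time axis
   (this is where d > 2 enters) the mass shell is a hyperboloid, and a quadratic polynomial
   vanishing on it is a multiple of its equation; so the only linear fields of order at most two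
   in J are the multiples of (box + m^2) phi.
   By (iv) and (v), sigma pi maps d^a phi with |a| <= 2 to a linear field of order at most |a|,
   and it differs from d^a phi by an element of J. Hence sigma pi fixes phi and d^mu phi, and
   sends d^mu d^nu phi to d^mu d^nu phi + c^{mu nu} (box + m^2) phi. Covariance (iii) makes c an
   invariant symmetric tensor, so c = lambda g (rotations and a boost suffice), and
   sigma pi ((box + m^2) phi) = 0 gives d lambda = -1. *)

definition type_ring :: "'a::comm_ring_1 ring" where
  "type_ring = \<lparr>carrier = UNIV, monoid.mult = (*), one = 1, zero = 0, add = (+)\<rparr>"

lemma cring_type_ring: "cring (type_ring :: 'a::comm_ring_1 ring)"
proof (rule cringI)
  show "abelian_group (type_ring :: 'a ring)"
    by (rule abelian_groupI) (auto simp: type_ring_def algebra_simps intro: exI[of _ "- _"])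
  show "comm_monoid (type_ring :: 'a ring)"
    by (rule comm_monoidI) (auto simp: type_ring_def algebra_simps)
qed (auto simp: type_ring_def algebra_simps)

lemma PR_eq_type_ring: "PR = type_ring"
  by (simp add: PR_def type_ring_def)

lemma cring_PR: "cring PR"
  by (simp add: PR_eq_type_ring cring_type_ring)

lemma poly_mapping_eq_sum_single:
  "p = (\<Sum>n\<in>Poly_Mapping.keys p. Poly_Mapping.single n (Poly_Mapping.lookup p n))"
  by (rule poly_mapping_eqI) (simp add: lookup_sum lookup_single when_def in_keys_iff)

lemma sum_keys_mono_neutral:
  assumes "finite K" "Poly_Mapping.keys p \<subseteq> K" "\<And>n. F n 0 = 0"
  shows "(\<Sum>n\<in>Poly_Mapping.keys p. F n (Poly_Mapping.lookup p n)) =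
    (\<Sum>n\<in>K. F n (Poly_Mapping.lookup p n))"
  by (rule sum.mono_neutral_left) (use assms in \<open>auto simp: in_keys_iff\<close>)

lemma sum_keys_add:
  fixes F :: "'a \<Rightarrow> 'b::comm_monoid_add \<Rightarrow> 'c::comm_monoid_add"
  assumes "\<And>n. F n 0 = 0" "\<And>n x y. F n (x + y) = F n x + F n y"
  shows "(\<Sum>n\<in>Poly_Mapping.keys (p + q). F n (Poly_Mapping.lookup (p + q) n)) =
    (\<Sum>n\<in>Poly_Mapping.keys p. F n (Poly_Mapping.lookup p n)) +
    (\<Sum>n\<in>Poly_Mapping.keys q. F n (Poly_Mapping.lookup q n))"
proof -
  let ?K = "Poly_Mapping.keys p \<union> Poly_Mapping.keys q"
  have "(\<Sum>n\<in>Poly_Mapping.keys (p + q). F n (Poly_Mapping.lookup (p + q) n)) =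
      (\<Sum>n\<in>?K. F n (Poly_Mapping.lookup (p + q) n))"
    by (rule sum_keys_mono_neutral) (use assms keys_add[of p q] in auto)
  also have "\<dots> = (\<Sum>n\<in>?K. F n (Poly_Mapping.lookup p n)) + (\<Sum>n\<in>?K. F n (Poly_Mapping.lookup q n))"
    by (simp add: lookup_add assms sum.distrib)
  also have "\<dots> = (\<Sum>n\<in>Poly_Mapping.keys p. F n (Poly_Mapping.lookup p n)) +
      (\<Sum>n\<in>Poly_Mapping.keys q. F n (Poly_Mapping.lookup q n))"
    by (subst (1 2) sum_keys_mono_neutral[symmetric]) (use assms in auto)
  finally show ?thesis .
qed

lemma sum_keys_single:
  assumes "\<And>n. F n 0 = 0"
  shows "(\<Sum>n\<in>Poly_Mapping.keys (Poly_Mapping.single k c).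
      F n (Poly_Mapping.lookup (Poly_Mapping.single k c) n)) = F k c"
  using assms by (cases "c = 0") auto

lemma smult_conv_mult: "smult c p = Poly_Mapping.single 0 c * p"
  unfolding smult_def by (rule mult_map_scale_conv_mult)

lemma lookup_smult: "Poly_Mapping.lookup (smult c p) n = c * Poly_Mapping.lookup p n"
  by (simp add: smult_def map.rep_eq when_def)

lemma smult_add_left: "smult (c + e) (p::'a::comm_monoid_add \<Rightarrow>\<^sub>0 real) = smult c p + smult e p"
  by (simp add: smult_conv_mult single_add distrib_right)

lemma smult_add_right: "smult c ((p::'a::comm_monoid_add \<Rightarrow>\<^sub>0 real) + q) = smult c p + smult c q"
  by (simp add: smult_conv_mult distrib_left)

lemma smult_smult: "smult c (smult e (p::'a::comm_monoid_add \<Rightarrow>\<^sub>0 real)) = smult (c * e) p"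
  by (simp add: smult_conv_mult mult.assoc[symmetric] mult_single)

lemma smult_minus_left: "smult (- c) (p::'a::comm_monoid_add \<Rightarrow>\<^sub>0 real) = - smult c p"
  by (simp add: smult_conv_mult single_uminus)

lemma smult_sum_right: "smult c (\<Sum>i\<in>I. (f i::'a::comm_monoid_add \<Rightarrow>\<^sub>0 real)) = (\<Sum>i\<in>I. smult c (f i))"
  by (simp add: smult_conv_mult sum_distrib_left)

lemma smult_zero_left [simp]: "smult 0 (p::'a::comm_monoid_add \<Rightarrow>\<^sub>0 real) = 0"
  by (simp add: smult_conv_mult)

lemma smult_one [simp]: "smult 1 (p::'a::comm_monoid_add \<Rightarrow>\<^sub>0 real) = p"
  by (simp add: smult_conv_mult)

lemma smult_sum_left: "smult (\<Sum>i\<in>I. f i) (p::'a::comm_monoid_add \<Rightarrow>\<^sub>0 real) = (\<Sum>i\<in>I. smult (f i) p)"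
  by (induction I rule: infinite_finite_induct) (auto simp: smult_add_left)

lemma single_one_eq_iff [simp]:
  "Poly_Mapping.single a (Suc 0) = Poly_Mapping.single b (Suc 0) \<longleftrightarrow> a = b"
  by (metis lookup_single_eq lookup_single_not_eq one_neq_zero One_nat_def)

section \<open>Quadrics vanishing on a hyperboloid\<close>

lemma hyperbola_quadric_eq_zero:
  fixes m c0 c1 c2 c3 c4 :: real
  assumes on_shell: "\<And>x y. y\<^sup>2 = x\<^sup>2 + m\<^sup>2 \<Longrightarrow> c0 + c1 * x + c2 * y + c3 * (x * y) + c4 * y\<^sup>2 = 0"
  shows "c0 = 0 \<and> c1 = 0 \<and> c2 = 0 \<and> c3 = 0 \<and> c4 = 0"
proof -
  define Y1 where "Y1 = sqrt (1 + m\<^sup>2)"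
  define Y2 where "Y2 = sqrt (4 + m\<^sup>2)"
  have Y1: "Y1\<^sup>2 = 1 + m\<^sup>2" "Y1 > 0"
    unfolding Y1_def by (simp_all add: add_pos_nonneg)
  have Y2: "Y2\<^sup>2 = 2\<^sup>2 + m\<^sup>2"
    unfolding Y2_def by (simp add: add_nonneg_nonneg)
  have "Y1\<^sup>2 = 1\<^sup>2 + m\<^sup>2" "Y1\<^sup>2 = (-1)\<^sup>2 + m\<^sup>2" "(-Y1)\<^sup>2 = 1\<^sup>2 + m\<^sup>2" "(-Y1)\<^sup>2 = (-1)\<^sup>2 + m\<^sup>2"
    using Y1 by simp_all
  note shell = this[THEN on_shell]
  have e: "c0 + c1 + c2 * Y1 + c3 * Y1 + c4 * (1 + m\<^sup>2) = 0"
    "c0 - c1 + c2 * Y1 - c3 * Y1 + c4 * (1 + m\<^sup>2) = 0"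
    "c0 + c1 - c2 * Y1 - c3 * Y1 + c4 * (1 + m\<^sup>2) = 0"
    "c0 - c1 - c2 * Y1 + c3 * Y1 + c4 * (1 + m\<^sup>2) = 0"
    using shell Y1 by simp_all
  then have c1: "c1 = 0" and "c2 * Y1 = 0" "c3 * Y1 = 0"
    by linarith+
  then have c23: "c2 = 0" "c3 = 0"
    using Y1 by simp_all
  have at1: "c0 + c4 * (1 + m\<^sup>2) = 0"
    using e(1) c1 c23 by simp
  moreover have "c0 + c4 * (4 + m\<^sup>2) = 0"
    using on_shell[OF Y2] Y2 c1 c23 unfolding Y2_def by simp
  ultimately have c4: "c4 = 0"
    by (simp add: algebra_simps)
  then have "c0 = 0"
    using at1 by simp
  then show ?thesis
    using c1 c23 c4 by simp
qed

lemma exponents_le2: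
  "{(u, v, w). u + v + w \<le> (2::nat)} =
    {(0,0,0), (1,0,0), (0,1,0), (0,0,1), (2,0,0), (0,2,0), (0,0,2), (1,1,0), (1,0,1), (0,1,1)}"
    (is "?L = ?R")
proof (rule Set.set_eqI, clarify)
  fix u v w :: nat
  show "(u, v, w) \<in> ?L \<longleftrightarrow> (u, v, w) \<in> ?R"
  proof
    assume "(u, v, w) \<in> ?L"
    then have "u + v + w \<le> 2"
      by simp
    then have "u = 0 \<or> u = 1 \<or> u = 2" "v = 0 \<or> v = 1 \<or> v = 2" "w = 0 \<or> w = 1 \<or> w = 2"
      and "u + v + w \<le> 2"
      by arith+
    then show "(u, v, w) \<in> ?R"
      by (elim disjE) simp_all
  qed auto
qed

(* A quadric vanishing on the hyperboloid x^2 - y^2 - z^2 + m^2 = 0 is a multiple of its equation;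
   the hypothesis c 2 0 0 = 0 forces that multiple to be 0. *)
lemma hyperboloid_quadric_eq_zero:
  fixes c :: "nat \<Rightarrow> nat \<Rightarrow> nat \<Rightarrow> real"
  assumes c200: "c 2 0 0 = 0"
    and on_shell: "\<And>x y z. x\<^sup>2 - y\<^sup>2 - z\<^sup>2 + m\<^sup>2 = 0 \<Longrightarrow>
      (\<Sum>(u, v, w) | u + v + w \<le> 2. c u v w * (x ^ u * y ^ v * z ^ w)) = 0"
    and "u + v + w \<le> 2"
  shows "c u v w = 0"
proof -
  have E: "c 0 0 0 + c 1 0 0 * x + c 0 1 0 * y + c 0 0 1 * z + c 0 2 0 * y\<^sup>2 + c 0 0 2 * z\<^sup>2
      + c 1 1 0 * (x * y) + c 1 0 1 * (x * z) + c 0 1 1 * (y * z) = 0"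
    if "x\<^sup>2 - y\<^sup>2 - z\<^sup>2 + m\<^sup>2 = 0" for x y z
    using on_shell[OF that, unfolded exponents_le2] c200 by (simp add: algebra_simps)
  have xy: "c 0 0 0 = 0 \<and> c 1 0 0 = 0 \<and> c 0 1 0 = 0 \<and> c 1 1 0 = 0 \<and> c 0 2 0 = 0"
  proof (rule hyperbola_quadric_eq_zero)
    fix x y :: real
    assume "y\<^sup>2 = x\<^sup>2 + m\<^sup>2"
    then show "c 0 0 0 + c 1 0 0 * x + c 0 1 0 * y + c 1 1 0 * (x * y) + c 0 2 0 * y\<^sup>2 = 0"
      using E[of x y 0] by simp
  qed
  have xz: "c 0 0 0 = 0 \<and> c 1 0 0 = 0 \<and> c 0 0 1 = 0 \<and> c 1 0 1 = 0 \<and> c 0 0 2 = 0"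
  proof (rule hyperbola_quadric_eq_zero)
    fix x z :: real
    assume "z\<^sup>2 = x\<^sup>2 + m\<^sup>2"
    then show "c 0 0 0 + c 1 0 0 * x + c 0 0 1 * z + c 1 0 1 * (x * z) + c 0 0 2 * z\<^sup>2 = 0"
      using E[of x 0 z] by simp
  qed
  define H where "H = sqrt ((1 + m\<^sup>2) / 2)"
  have H: "H\<^sup>2 = (1 + m\<^sup>2) / 2" "H\<^sup>2 > 0"
    unfolding H_def by (simp_all add: add_pos_nonneg)
  have "c 0 1 1 * H\<^sup>2 = 0"
    using E[of 1 H H] H xy xz by (simp add: power2_eq_square)
  then have "c 0 1 1 = 0"
    using H(2) by simp
  moreover have "(u, v, w) \<in> {(u, v, w). u + v + w \<le> 2}"
    using assms(3) by simp
  ultimately show ?thesis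
    using c200 xy xz unfolding exponents_le2 by auto
qed

section \<open>Linear fields and the free field equation\<close>

definition lin_term :: "'d mi \<Rightarrow> real \<Rightarrow> 'd fld" where
  "lin_term a c = Poly_Mapping.single (Poly_Mapping.single a 1) c"

definition lin_coeff :: "'d fld \<Rightarrow> 'd mi \<Rightarrow> real" where
  "lin_coeff p a = Poly_Mapping.lookup p (Poly_Mapping.single a 1)"

definition mi_order :: "'d::finite mi \<Rightarrow> nat" where
  "mi_order a = (\<Sum>\<mu>\<in>UNIV. a \<mu>)"

definition mi1 :: "'d \<Rightarrow> 'd mi" where
  "mi1 \<mu> = miadd mi0 (emi \<mu>)"

definition mi2 :: "'d \<Rightarrow> 'd \<Rightarrow> 'd mi" where
  "mi2 \<mu> \<nu> = miadd (miadd mi0 (emi \<nu>)) (emi \<mu>)"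

lemma dphi_eq_lin_term: "dphi a = lin_term a 1"
  by (simp add: dphi_def lin_term_def)

lemma lin_term_zero [simp]: "lin_term a 0 = 0"
  by (simp add: lin_term_def)

lemma lin_term_add: "lin_term a (c + e) = lin_term a c + lin_term a e"
  by (simp add: lin_term_def single_add)

lemma lin_term_sum: "lin_term a (\<Sum>i\<in>I. f i) = (\<Sum>i\<in>I. lin_term a (f i))"
  by (induction I rule: infinite_finite_induct) (auto simp: lin_term_add)

lemma smult_lin_term: "smult c (lin_term a e) = lin_term a (c * e)"
  by (simp add: smult_def lin_term_def)

lemma lin_coeff_add: "lin_coeff (p + q) a = lin_coeff p a + lin_coeff q a"
  by (simp add: lin_coeff_def lookup_add)

lemma lin_coeff_diff: "lin_coeff (p - q) a = lin_coeff p a - lin_coeff q a"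
  by (simp add: lin_coeff_def lookup_minus)

lemma lin_coeff_smult: "lin_coeff (smult c p) a = c * lin_coeff p a"
  by (simp add: lookup_smult lin_coeff_def)

lemma lin_coeff_sum: "lin_coeff (\<Sum>i\<in>I. f i) a = (\<Sum>i\<in>I. lin_coeff (f i) a)"
  by (simp add: lin_coeff_def lookup_sum)

lemma lin_coeff_lin_term: "lin_coeff (lin_term b c) a = (if a = b then c else 0)"
  by (simp add: lin_coeff_def lin_term_def lookup_single when_def)

lemma mi_order_mi0 [simp]: "mi_order mi0 = 0"
  by (simp add: mi_order_def mi0_def)

lemma mi_order_mi1 [simp]: "mi_order (mi1 \<mu>) = 1"
  by (simp add: mi_order_def mi1_def miadd_def mi0_def emi_def)

lemma mi_order_mi2 [simp]: "mi_order (mi2 \<mu> \<nu>) = 2"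
  by (simp add: mi_order_def mi2_def miadd_def mi0_def emi_def sum.distrib)

lemma mi2_commute: "mi2 \<mu> \<nu> = mi2 \<nu> \<mu>"
  by (auto simp: mi2_def miadd_def)

lemma mi2_diag_eq_iff: "mi2 \<mu> \<mu> = mi2 \<nu> \<nu> \<longleftrightarrow> \<mu> = \<nu>"
  by (auto simp: mi2_def miadd_def mi0_def emi_def fun_eq_iff split: if_splits)

lemma mi2_neq_mi0: "mi2 \<mu> \<nu> \<noteq> mi0"
  by (auto simp: mi2_def miadd_def mi0_def emi_def fun_eq_iff)

lemma derivation_add: "derivation f (p + q) = derivation f p + derivation f q"
  unfolding derivation_def by (rule sum_keys_add) (auto simp: smult_add_left)

lemma derivation_sum: "derivation f (\<Sum>i\<in>I. g i) = (\<Sum>i\<in>I. derivation f (g i))"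
  by (induction I rule: infinite_finite_induct) (simp_all add: derivation_add derivation_def[of _ 0])

lemma derivation_lin_term: "derivation f (lin_term a c) = smult c (f a)"
  unfolding derivation_def lin_term_def by (subst sum_keys_single) (auto simp: monom1_def)

lemma pd_lin_term: "pd \<mu> (lin_term a c) = lin_term (miadd a (emi \<mu>)) c"
  by (simp add: pd_def derivation_lin_term dphi_eq_lin_term smult_lin_term)

lemma pd_sum: "pd \<mu> (\<Sum>i\<in>I. g i) = (\<Sum>i\<in>I. pd \<mu> (g i))"
  by (simp add: pd_def derivation_sum)

lemma pd_dphi0: "pd \<mu> (dphi mi0) = lin_term (mi1 \<mu>) 1"
  by (simp add: dphi_eq_lin_term pd_lin_term mi1_def)

lemma pd_pd_dphi0: "pd \<mu> (pd \<nu> (dphi mi0)) = lin_term (mi2 \<mu> \<nu>) 1"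
  by (simp add: dphi_eq_lin_term pd_lin_term mi2_def)

lemma KG_eq_lin_terms:
  fixes t :: "'d::finite"
  shows "KG t m = (\<Sum>\<mu>\<in>UNIV. lin_term (mi2 \<mu> \<mu>) (mink t \<mu> \<mu>)) + lin_term mi0 (m\<^sup>2)"
proof -
  have "(\<Sum>\<nu>\<in>UNIV. smult (mink t \<mu> \<nu>) (pd \<mu> (pd \<nu> (dphi mi0)))) =
      (\<Sum>\<nu>\<in>UNIV. if \<nu> = \<mu> then lin_term (mi2 \<mu> \<mu>) (mink t \<mu> \<mu>) else 0)" for \<mu>
    by (rule sum.cong) (auto simp: pd_pd_dphi0 smult_lin_term mink_def)
  then show ?thesis
    by (simp add: KG_def dphi_eq_lin_term smult_lin_term)
qed

lemma lin_coeff_KG: 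
  fixes t :: "'d::finite"
  shows "lin_coeff (KG t m) (mi2 \<nu> \<nu>) = mink t \<nu> \<nu>"
  by (simp add: KG_eq_lin_terms lin_coeff_add lin_coeff_sum lin_coeff_lin_term mi2_diag_eq_iff mi2_neq_mi0)

section \<open>Plane waves and the ideal J\<close>

definition mi_pow :: "('d::finite \<Rightarrow> real) \<Rightarrow> 'd mi \<Rightarrow> real" where
  "mi_pow k a = (\<Prod>\<mu>\<in>UNIV. k \<mu> ^ a \<mu>)"

definition mon_pow :: "('d::finite \<Rightarrow> real) \<Rightarrow> 'd mon \<Rightarrow> real" where
  "mon_pow k n = (\<Prod>a\<in>Poly_Mapping.keys n. mi_pow k a ^ Poly_Mapping.lookup n a)"

definition plane_wave :: "('d::finite \<Rightarrow> real) \<Rightarrow> 'd fld \<Rightarrow> real" where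
  "plane_wave k p = (\<Sum>n\<in>Poly_Mapping.keys p. Poly_Mapping.lookup p n * mon_pow k n)"

lemma mi_pow_mi0 [simp]: "mi_pow k mi0 = 1"
  by (simp add: mi_pow_def mi0_def)

lemma mi_pow_add_emi: "mi_pow k (miadd a (emi \<mu>)) = k \<mu> * mi_pow k a"
proof -
  have "mi_pow k (miadd a (emi \<mu>)) = (\<Prod>\<rho>\<in>UNIV. k \<rho> ^ a \<rho> * (if \<rho> = \<mu> then k \<rho> else 1))"
    unfolding mi_pow_def miadd_def emi_def by (rule prod.cong) (auto simp: power_add)
  also have "\<dots> = mi_pow k a * k \<mu>"
    by (simp add: prod.distrib mi_pow_def)
  finally show ?thesis
    by simp
qed

lemma mi_pow_mi2_diag: "mi_pow k (mi2 \<mu> \<mu>) = (k \<mu>)\<^sup>2"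
  by (simp add: mi2_def mi_pow_add_emi power2_eq_square)

lemma mon_pow_superset:
  "finite K \<Longrightarrow> Poly_Mapping.keys n \<subseteq> K \<Longrightarrow> mon_pow k n = (\<Prod>a\<in>K. mi_pow k a ^ Poly_Mapping.lookup n a)"
  unfolding mon_pow_def by (rule prod.mono_neutral_left) (auto simp: in_keys_iff)

lemma mon_pow_add: "mon_pow k (n + n') = mon_pow k n * mon_pow k n'"
proof -
  let ?K = "Poly_Mapping.keys n \<union> Poly_Mapping.keys n'"
  have "mon_pow k (n + n') = (\<Prod>a\<in>?K. mi_pow k a ^ Poly_Mapping.lookup (n + n') a)"
    by (rule mon_pow_superset) (use keys_add[of n n'] in auto)
  also have "\<dots> = (\<Prod>a\<in>?K. mi_pow k a ^ Poly_Mapping.lookup n a) * (\<Prod>a\<in>?K. mi_pow k a ^ Poly_Mapping.lookup n' a)"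
    by (simp add: lookup_add power_add prod.distrib)
  also have "\<dots> = mon_pow k n * mon_pow k n'"
    by (simp add: mon_pow_superset[of ?K n k] mon_pow_superset[of ?K n' k])
  finally show ?thesis .
qed

lemma plane_wave_single [simp]: "plane_wave k (Poly_Mapping.single n c) = c * mon_pow k n"
  unfolding plane_wave_def by (rule sum_keys_single) auto

lemma plane_wave_lin_term: "plane_wave k (lin_term a c) = c * mi_pow k a"
  by (simp add: lin_term_def mon_pow_def)

lemma plane_wave_add: "plane_wave k (p + q) = plane_wave k p + plane_wave k q"
  unfolding plane_wave_def by (rule sum_keys_add) (auto simp: algebra_simps)

lemma plane_wave_sum: "plane_wave k (\<Sum>i\<in>I. f i) = (\<Sum>i\<in>I. plane_wave k (f i))"
  by (induction I rule: infinite_finite_induct) (simp_all add: plane_wave_add plane_wave_def[of _ 0])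

lemma plane_wave_mult: "plane_wave k (p * q) = plane_wave k p * plane_wave k q"
proof -
  have "p * q = (\<Sum>n\<in>Poly_Mapping.keys p. \<Sum>n'\<in>Poly_Mapping.keys q.
       Poly_Mapping.single (n + n') (Poly_Mapping.lookup p n * Poly_Mapping.lookup q n'))"
    by (subst poly_mapping_eq_sum_single, subst (2) poly_mapping_eq_sum_single)
       (simp add: sum_product mult_single)
  then have "plane_wave k (p * q) = (\<Sum>n\<in>Poly_Mapping.keys p. \<Sum>n'\<in>Poly_Mapping.keys q.
       (Poly_Mapping.lookup p n * Poly_Mapping.lookup q n') * mon_pow k (n + n'))"
    by (simp add: plane_wave_sum)
  also have "\<dots> = plane_wave k p * plane_wave k q"
    by (simp add: plane_wave_def mon_pow_add sum_product algebra_simps)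
  finally show ?thesis .
qed

lemma plane_wave_ring_hom: "plane_wave k \<in> ring_hom PR type_ring"
proof -
  have "plane_wave k 1 = 1"
    using plane_wave_single[of k 0 1] by (simp add: mon_pow_def)
  then show ?thesis
    by (intro ring_hom_memI) (auto simp: PR_def type_ring_def plane_wave_add plane_wave_mult)
qed

lemma ideal_plane_wave_kernel: "ideal {p. plane_wave k p = 0} PR"
proof -
  interpret R: cring PR by (rule cring_PR)
  interpret S: cring "type_ring :: real ring" by (rule cring_type_ring)
  have "ring_hom_ring PR type_ring (plane_wave k)"
    by (rule ring_hom_ringI2) (auto simp: plane_wave_ring_hom R.ring_axioms S.ring_axioms)
  from ring_hom_ring.kernel_is_ideal[OF this] show ?thesis
    by (simp add: a_kernel_def' PR_def type_ring_def)
qed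

lemma ideal_Jid: "ideal (Jid t m) PR"
proof -
  interpret R: cring PR by (rule cring_PR)
  show ?thesis unfolding Jid_def by (rule R.genideal_ideal) (simp add: PR_def)
qed

lemma KG_in_Jid: "KG t m \<in> Jid t m"
proof -
  interpret R: cring PR by (rule cring_PR)
  have "KGders t m \<subseteq> Jid t m"
    unfolding Jid_def by (rule R.genideal_self) (simp add: PR_def)
  then show ?thesis
    by (simp add: subset_iff KGders.base)
qed

lemma Jid_diff: "p \<in> Jid t m \<Longrightarrow> q \<in> Jid t m \<Longrightarrow> p - q \<in> Jid t m"
proof -
  assume p: "p \<in> Jid t m" and q: "q \<in> Jid t m"
  interpret I: ideal "Jid t m" PR by (rule ideal_Jid)
  have "(-1) \<otimes>\<^bsub>PR\<^esub> q \<in> Jid t m"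
    by (rule I.I_l_closed) (auto simp: q PR_def)
  then have "p \<oplus>\<^bsub>PR\<^esub> ((-1) \<otimes>\<^bsub>PR\<^esub> q) \<in> Jid t m"
    using p by (intro additive_subgroup.a_closed[OF ideal.axioms(1)[OF ideal_Jid]])
  then show ?thesis
    by (simp add: PR_def)
qed

lemma Jid_smult: "p \<in> Jid t m \<Longrightarrow> smult c p \<in> Jid t m"
proof -
  assume p: "p \<in> Jid t m"
  interpret I: ideal "Jid t m" PR by (rule ideal_Jid)
  have "Poly_Mapping.single 0 c \<otimes>\<^bsub>PR\<^esub> p \<in> Jid t m"
    by (rule I.I_l_closed) (auto simp: p PR_def)
  then show ?thesis
    by (simp add: PR_def smult_conv_mult)
qed

lemma sum_lin_terms_lin_coeff:
  assumes "finite A" "\<forall>n\<in>Poly_Mapping.keys p. \<exists>a\<in>A. n = Poly_Mapping.single a 1"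
  shows "p = (\<Sum>a\<in>A. lin_term a (lin_coeff p a))"
proof (rule poly_mapping_eqI)
  fix n
  show "Poly_Mapping.lookup p n = Poly_Mapping.lookup (\<Sum>a\<in>A. lin_term a (lin_coeff p a)) n"
  proof (cases "n \<in> Poly_Mapping.keys p")
    case True
    then obtain b where b: "b \<in> A" "n = Poly_Mapping.single b 1"
      using assms by auto
    have "Poly_Mapping.lookup (\<Sum>a\<in>A. lin_term a (lin_coeff p a)) n = (\<Sum>a\<in>A. if a = b then lin_coeff p a else 0)"
      unfolding lookup_sum by (rule sum.cong) (auto simp: b lin_term_def lookup_single when_def)
    also have "\<dots> = lin_coeff p b"
      using b assms(1) by simp
    finally show ?thesis
      by (simp add: lin_coeff_def b)
  next
    case False
    have "Poly_Mapping.lookup (\<Sum>a\<in>A. lin_term a (lin_coeff p a)) n = (\<Sum>a\<in>A. 0)"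
      unfolding lookup_sum by (rule sum.cong)
        (use False in \<open>auto simp: lin_term_def lookup_single when_def lin_coeff_def in_keys_iff\<close>)
    then show ?thesis
      using False by (simp add: in_keys_iff)
  qed
qed

lemma P1_eq_sum_lin_terms:
  assumes "p \<in> P1"
  obtains A where "finite A" "p = (\<Sum>a\<in>A. lin_term a (lin_coeff p a))"
proof
  let ?A = "{a. Poly_Mapping.single a 1 \<in> Poly_Mapping.keys p}"
  show "finite ?A"
    by (rule finite_vimageI[where h = "\<lambda>a. Poly_Mapping.single a (1::nat)", unfolded vimage_def])
       (auto simp: inj_on_def)
  then show "p = (\<Sum>a\<in>?A. lin_term a (lin_coeff p a))"
    by (rule sum_lin_terms_lin_coeff) (use assms in \<open>auto simp: P1_def\<close>)
qed

lemma P1_add: "p \<in> P1 \<Longrightarrow> q \<in> P1 \<Longrightarrow> p + q \<in> P1"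
  using keys_add[of p q] by (auto simp: P1_def)

lemma P1_sum: "(\<And>i. i \<in> I \<Longrightarrow> f i \<in> P1) \<Longrightarrow> (\<Sum>i\<in>I. f i) \<in> P1"
  using keys_sum[of f I] by (auto simp: P1_def)

lemma P1_lin_term: "lin_term a c \<in> P1"
  by (auto simp: P1_def lin_term_def)

lemma plane_wave_KG:
  "plane_wave k (KG t m) = (\<Sum>\<mu>\<in>UNIV. mink t \<mu> \<mu> * (k \<mu>)\<^sup>2) + m\<^sup>2"
  by (simp add: KG_eq_lin_terms plane_wave_add plane_wave_sum plane_wave_lin_term mi_pow_mi2_diag)

lemma plane_wave_pd_P1:
  assumes "p \<in> P1"
  shows "pd \<mu> p \<in> P1" and "plane_wave k (pd \<mu> p) = k \<mu> * plane_wave k p"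
proof -
  obtain A where "finite A" and p: "p = (\<Sum>a\<in>A. lin_term a (lin_coeff p a))"
    using P1_eq_sum_lin_terms[OF assms] .
  have pd: "pd \<mu> p = (\<Sum>a\<in>A. lin_term (miadd a (emi \<mu>)) (lin_coeff p a))"
    by (subst p) (simp add: pd_sum pd_lin_term)
  show "pd \<mu> p \<in> P1"
    unfolding pd by (intro P1_sum P1_lin_term)
  show "plane_wave k (pd \<mu> p) = k \<mu> * plane_wave k p"
    unfolding pd by (subst (2) p)
      (simp add: plane_wave_sum plane_wave_lin_term mi_pow_add_emi sum_distrib_left algebra_simps)
qed

(* d^mu multiplies the plane wave of a linear field by k mu, so every generator of J is killed. *)
lemma plane_wave_Jid:
  assumes shell: "(\<Sum>\<mu>\<in>UNIV. mink t \<mu> \<mu> * (k \<mu>)\<^sup>2) + m\<^sup>2 = 0"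
    and p: "p \<in> Jid t m"
  shows "plane_wave k p = 0"
proof -
  interpret R: cring PR by (rule cring_PR)
  have "q \<in> P1 \<and> plane_wave k q = 0" if "q \<in> KGders t m" for q
    using that
  proof induction
    case base
    have "KG t m \<in> P1"
      by (simp add: KG_eq_lin_terms P1_add P1_sum P1_lin_term)
    then show ?case
      using plane_wave_KG[of k t m] shell by simp
  next
    case (step p \<mu>)
    then show ?case
      by (simp add: plane_wave_pd_P1)
  qed
  then have "Jid t m \<subseteq> {p. plane_wave k p = 0}"
    unfolding Jid_def by (intro R.genideal_minimal ideal_plane_wave_kernel) auto
  then show ?thesis
    using p by auto
qed

section \<open>Linear fields of order at most two in J\<close>

definition P1_le2 :: "'d::finite fld set" where
  "P1_le2 = {p. \<forall>n\<in>Poly_Mapping.keys p. \<exists>a. n = Poly_Mapping.single a 1 \<and> mi_order a \<le> 2}"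

lemma finite_mi_order_le: "finite {a :: 'd::finite mi. mi_order a \<le> N}"
proof (rule finite_subset)
  show "{a :: 'd mi. mi_order a \<le> N} \<subseteq> Pi\<^sub>E UNIV (\<lambda>_. {..N})"
  proof
    fix a :: "'d mi"
    assume "a \<in> {a. mi_order a \<le> N}"
    then have "a \<mu> \<le> N" for \<mu>
      using member_le_sum[of \<mu> UNIV a] by (simp add: mi_order_def)
    then show "a \<in> Pi\<^sub>E UNIV (\<lambda>_. {..N})"
      by (simp add: PiE_UNIV_domain)
  qed
  show "finite (Pi\<^sub>E (UNIV :: 'd set) (\<lambda>_. {..N}))"
    by (rule finite_PiE) auto
qed

lemma P1_le2_eq_sum_lin_terms: "p \<in> P1_le2 \<Longrightarrow> p = (\<Sum>a | mi_order a \<le> 2. lin_term a (lin_coeff p a))"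
  by (rule sum_lin_terms_lin_coeff[OF finite_mi_order_le]) (auto simp: P1_le2_def)

lemma P1_le2_diff: "p \<in> P1_le2 \<Longrightarrow> q \<in> P1_le2 \<Longrightarrow> p - q \<in> P1_le2"
  using keys_diff[of p q] by (auto simp: P1_le2_def)

lemma P1_le2_smult: "p \<in> P1_le2 \<Longrightarrow> smult c p \<in> P1_le2"
  by (auto simp: P1_le2_def in_keys_iff lookup_smult)

lemma P1_le2_lin_term: "mi_order a \<le> 2 \<Longrightarrow> lin_term a c \<in> P1_le2"
  by (auto simp: P1_le2_def lin_term_def)

lemma P1_le2_add: "p \<in> P1_le2 \<Longrightarrow> q \<in> P1_le2 \<Longrightarrow> p + q \<in> P1_le2"
  using keys_add[of p q] by (auto simp: P1_le2_def)

lemma P1_le2_sum: "(\<And>i. i \<in> I \<Longrightarrow> f i \<in> P1_le2) \<Longrightarrow> (\<Sum>i\<in>I. f i) \<in> P1_le2"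
  using keys_sum[of f I] by (auto simp: P1_le2_def)

lemma KG_in_P1_le2: "KG t m \<in> P1_le2"
  by (simp add: KG_eq_lin_terms P1_le2_add P1_le2_sum P1_le2_lin_term)

definition coords3 :: "'d \<Rightarrow> 'd \<Rightarrow> 'd \<Rightarrow> 'a \<Rightarrow> 'a \<Rightarrow> 'a \<Rightarrow> 'd \<Rightarrow> 'a::zero" where
  "coords3 t i j x y z = (\<lambda>\<rho>. if \<rho> = t then x else if \<rho> = i then y else if \<rho> = j then z else 0)"

lemma sum_UNIV_three:
  fixes f :: "'d::finite \<Rightarrow> 'a::comm_monoid_add"
  assumes "t \<noteq> i" "t \<noteq> j" "i \<noteq> j" "\<And>\<rho>. \<rho> \<notin> {t, i, j} \<Longrightarrow> f \<rho> = 0"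
  shows "sum f UNIV = f t + f i + f j"
proof -
  have "sum f UNIV = sum f {t, i, j}"
    by (rule sum.mono_neutral_right) (use assms in auto)
  then show ?thesis
    using assms by (simp add: add.assoc)
qed

lemma prod_UNIV_three:
  fixes f :: "'d::finite \<Rightarrow> 'a::comm_monoid_mult"
  assumes "t \<noteq> i" "t \<noteq> j" "i \<noteq> j" "\<And>\<rho>. \<rho> \<notin> {t, i, j} \<Longrightarrow> f \<rho> = 1"
  shows "prod f UNIV = f t * f i * f j"
proof -
  have "prod f UNIV = prod f {t, i, j}"
    by (rule prod.mono_neutral_right) (use assms in auto)
  then show ?thesis
    using assms by (simp add: mult.assoc)
qed

lemma mi_pow_coords3:
  fixes t :: "'d::finite"
  assumes "t \<noteq> i" "t \<noteq> j" "i \<noteq> j"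
  shows "mi_pow (coords3 t i j x y z) (coords3 t i j u v w) = x ^ u * y ^ v * z ^ w"
  unfolding mi_pow_def by (subst prod_UNIV_three[OF assms]) (use assms in \<open>auto simp: coords3_def\<close>)

lemma mi_pow_coords3_eq_0:
  fixes t :: "'d::finite"
  assumes "\<rho> \<notin> {t, i, j}" "a \<rho> \<noteq> 0"
  shows "mi_pow (coords3 t i j x y z) a = 0"
  unfolding mi_pow_def by (rule prod_zero) (use assms in \<open>auto simp: coords3_def intro!: bexI[of _ \<rho>]\<close>)

lemma mi_order_coords3:
  fixes t :: "'d::finite"
  assumes "t \<noteq> i" "t \<noteq> j" "i \<noteq> j"
  shows "mi_order (coords3 t i j u v w) = u + v + w"
  unfolding mi_order_def by (subst sum_UNIV_three[OF assms]) (use assms in \<open>auto simp: coords3_def\<close>)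

lemma mi_order_supported_on_three:
  fixes t :: "'d::finite"
  assumes "t \<noteq> i" "t \<noteq> j" "i \<noteq> j" "\<forall>\<rho>. \<rho> \<notin> {t, i, j} \<longrightarrow> a \<rho> = 0"
  shows "mi_order a = a t + a i + a j"
  unfolding mi_order_def by (rule sum_UNIV_three) (use assms in auto)

lemma bij_betw_coords3:
  fixes t :: "'d::finite"
  assumes d: "t \<noteq> i" "t \<noteq> j" "i \<noteq> j"
  shows "bij_betw (\<lambda>(u, v, w). coords3 t i j u v w) {(u, v, w). u + v + w \<le> 2}
    {a. mi_order a \<le> 2 \<and> (\<forall>\<rho>. \<rho> \<notin> {t, i, j} \<longrightarrow> a \<rho> = 0)}"
proof (rule bij_betw_byWitness[where f' = "\<lambda>a. (a t, a i, a j)"])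
  show "\<forall>a\<in>{(u, v, w). u + v + w \<le> 2}. (\<lambda>a. (a t, a i, a j)) ((\<lambda>(u, v, w). coords3 t i j u v w) a) = a"
    using d by (auto simp: coords3_def)
  show "\<forall>a\<in>{a. mi_order a \<le> 2 \<and> (\<forall>\<rho>. \<rho> \<notin> {t, i, j} \<longrightarrow> a \<rho> = 0)}.
      (\<lambda>(u, v, w). coords3 t i j u v w) ((\<lambda>a. (a t, a i, a j)) a) = a"
    using d by (auto simp: coords3_def fun_eq_iff)
  show "(\<lambda>(u, v, w). coords3 t i j u v w) ` {(u, v, w). u + v + w \<le> 2}
      \<subseteq> {a. mi_order a \<le> 2 \<and> (\<forall>\<rho>. \<rho> \<notin> {t, i, j} \<longrightarrow> a \<rho> = 0)}"
    using d by (auto simp: mi_order_coords3) (auto simp: coords3_def)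
  show "(\<lambda>a. (a t, a i, a j)) ` {a. mi_order a \<le> 2 \<and> (\<forall>\<rho>. \<rho> \<notin> {t, i, j} \<longrightarrow> a \<rho> = 0)}
      \<subseteq> {(u, v, w). u + v + w \<le> 2}"
    using d by (auto simp: mi_order_supported_on_three)
qed

lemma plane_wave_coords3:
  fixes t :: "'d::finite"
  assumes d: "t \<noteq> i" "t \<noteq> j" "i \<noteq> j" and p: "p \<in> P1_le2"
  shows "plane_wave (coords3 t i j x y z) p =
    (\<Sum>(u, v, w) | u + v + w \<le> 2. lin_coeff p (coords3 t i j u v w) * (x ^ u * y ^ v * z ^ w))"
proof -
  let ?k = "coords3 t i j x y z"
  let ?B = "{a. mi_order a \<le> 2 \<and> (\<forall>\<rho>. \<rho> \<notin> {t, i, j} \<longrightarrow> a \<rho> = 0)}"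
  have "plane_wave ?k p = (\<Sum>a | mi_order a \<le> 2. lin_coeff p a * mi_pow ?k a)"
    by (subst P1_le2_eq_sum_lin_terms[OF p]) (simp add: plane_wave_sum plane_wave_lin_term)
  also have "\<dots> = (\<Sum>a\<in>?B. lin_coeff p a * mi_pow ?k a)"
    by (rule sum.mono_neutral_right[OF finite_mi_order_le])
       (auto intro: mi_pow_coords3_eq_0)
  also have "\<dots> = (\<Sum>(u, v, w) | u + v + w \<le> 2.
      lin_coeff p (coords3 t i j u v w) * mi_pow ?k (coords3 t i j u v w))"
    by (subst sum.reindex_bij_betw[OF bij_betw_coords3[OF d], symmetric]) (simp add: case_prod_beta)
  also have "\<dots> = (\<Sum>(u, v, w) | u + v + w \<le> 2.
      lin_coeff p (coords3 t i j u v w) * (x ^ u * y ^ v * z ^ w))"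
    by (simp add: mi_pow_coords3[OF d])
  finally show ?thesis .
qed

lemma mink_coords3:
  fixes t :: "'d::finite"
  assumes "t \<noteq> i" "t \<noteq> j" "i \<noteq> j"
  shows "(\<Sum>\<mu>\<in>UNIV. mink t \<mu> \<mu> * (coords3 t i j x y z \<mu>)\<^sup>2) = x\<^sup>2 - y\<^sup>2 - z\<^sup>2"
  by (subst sum_UNIV_three[OF assms]) (use assms in \<open>auto simp: coords3_def mink_def\<close>)

lemma exists_plane_containing_support:
  fixes t :: "'d::finite"
  assumes "CARD('d) > 2" and "mi_order a \<le> 2"
  obtains i j where "t \<noteq> i" "t \<noteq> j" "i \<noteq> j" "\<forall>\<rho>. \<rho> \<notin> {t, i, j} \<longrightarrow> a \<rho> = 0"
proof -
  let ?S = "{\<rho>. a \<rho> \<noteq> 0} - {t}"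
  have "card {\<rho>. a \<rho> \<noteq> 0} \<le> (\<Sum>\<rho> | a \<rho> \<noteq> 0. a \<rho>)"
    using sum_mono[of "{\<rho>. a \<rho> \<noteq> 0}" "\<lambda>_. 1" a] by simp
  also have "\<dots> \<le> mi_order a"
    unfolding mi_order_def by (rule sum_mono2) auto
  finally have "card ?S \<le> 2"
    using assms(2) card_mono[of "{\<rho>. a \<rho> \<noteq> 0}" ?S] by simp
  moreover have "2 \<le> card (UNIV - {t})"
    using assms(1) by (simp add: card_Diff_singleton)
  ultimately obtain B where B: "?S \<subseteq> B" "B \<subseteq> UNIV - {t}" "card B = 2"
    using exists_subset_between[of ?S 2 "UNIV - {t}"] by auto
  then obtain i j where ij: "B = {i, j}" "i \<noteq> j"
    by (auto simp: card_2_iff)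
  show ?thesis
  proof (rule that)
    show "t \<noteq> i" "t \<noteq> j" "\<forall>\<rho>. \<rho> \<notin> {t, i, j} \<longrightarrow> a \<rho> = 0"
      using B ij by auto
  qed (rule ij(2))
qed

(* Restricted to momenta in a three-dimensional subspace through the time axis, an element of J
   of order at most two is a quadric vanishing on the mass shell. *)
lemma P1_le2_Jid_lin_coeff_eq_0:
  fixes t :: "'d::finite"
  assumes dim: "CARD('d) > 2" and r: "r \<in> P1_le2" "r \<in> Jid t m"
    and r_tt: "lin_coeff r (mi2 t t) = 0" and a: "mi_order a \<le> 2"
  shows "lin_coeff r a = 0"
proof -
  obtain i j where d: "t \<noteq> i" "t \<noteq> j" "i \<noteq> j" and supp: "\<forall>\<rho>. \<rho> \<notin> {t, i, j} \<longrightarrow> a \<rho> = 0"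
    using exists_plane_containing_support[OF dim a] .
  let ?c = "\<lambda>u v w. lin_coeff r (coords3 t i j u v w)"
  have "coords3 t i j 2 0 0 = mi2 t t"
    using d by (auto simp: coords3_def mi2_def miadd_def mi0_def emi_def fun_eq_iff)
  then have c200: "?c 2 0 0 = 0"
    using r_tt by simp
  have shell: "(\<Sum>(u, v, w) | u + v + w \<le> 2. ?c u v w * (x ^ u * y ^ v * z ^ w)) = 0"
    if "x\<^sup>2 - y\<^sup>2 - z\<^sup>2 + m\<^sup>2 = 0" for x y z
    using plane_wave_Jid[OF _ r(2), of "coords3 t i j x y z"] that
    by (simp add: plane_wave_coords3[OF d r(1)] mink_coords3[OF d])
  have "a t + a i + a j \<le> 2"
    using a supp d by (simp add: mi_order_supported_on_three)
  from hyperboloid_quadric_eq_zero[where c = ?c, OF c200 shell this]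
  have "lin_coeff r (coords3 t i j (a t) (a i) (a j)) = 0" .
  moreover have "coords3 t i j (a t) (a i) (a j) = a"
    using supp by (auto simp: coords3_def fun_eq_iff)
  ultimately show ?thesis
    by simp
qed

lemma P1_le2_Jid_eq_smult_KG:
  fixes t :: "'d::finite"
  assumes dim: "CARD('d) > 2" and p: "p \<in> P1_le2" "p \<in> Jid t m"
  shows "p = smult (lin_coeff p (mi2 t t)) (KG t m)"
proof -
  define r where "r = p - smult (lin_coeff p (mi2 t t)) (KG t m)"
  have r: "r \<in> P1_le2" "r \<in> Jid t m"
    unfolding r_def using p
    by (simp_all add: P1_le2_diff P1_le2_smult KG_in_P1_le2 Jid_diff Jid_smult KG_in_Jid)
  have "lin_coeff r (mi2 t t) = 0"
    by (simp add: r_def lin_coeff_diff lin_coeff_smult lin_coeff_KG mink_def)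
  then have "r = (\<Sum>a | mi_order a \<le> 2. lin_term a 0)"
    using P1_le2_Jid_lin_coeff_eq_0[OF dim r]
    by (subst P1_le2_eq_sum_lin_terms[OF r(1)]) (rule sum.cong, auto)
  then show ?thesis
    by (simp add: r_def)
qed

section \<open>Lorentz transformations in a coordinate plane\<close>

definition plane_matrix :: "'d::finite \<Rightarrow> 'd \<Rightarrow> real \<Rightarrow> real \<Rightarrow> real \<Rightarrow> real \<Rightarrow> real^'d^'d" where
  "plane_matrix i j a b c e = (\<chi> \<rho> \<sigma>. if \<rho> = i then (if \<sigma> = i then a else if \<sigma> = j then b else 0)
     else if \<rho> = j then (if \<sigma> = i then c else if \<sigma> = j then e else 0)
     else (if \<rho> = \<sigma> then 1 else 0))"

lemma plane_matrix_nth: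
  "plane_matrix i j a b c e $ \<rho> $ \<sigma> = (if \<rho> = i then (if \<sigma> = i then a else if \<sigma> = j then b else 0)
     else if \<rho> = j then (if \<sigma> = i then c else if \<sigma> = j then e else 0)
     else (if \<rho> = \<sigma> then 1 else 0))"
  by (simp add: plane_matrix_def)

lemma sum_UNIV_two:
  fixes f :: "'d::finite \<Rightarrow> 'a::comm_monoid_add"
  assumes "i \<noteq> j" "\<And>\<rho>. \<rho> \<notin> {i, j} \<Longrightarrow> f \<rho> = 0"
  shows "sum f UNIV = f i + f j"
proof -
  have "sum f UNIV = sum f {i, j}"
    by (rule sum.mono_neutral_right) (use assms in auto)
  then show ?thesis
    using assms by simp
qed

lemma prod_UNIV_two:
  fixes f :: "'d::finite \<Rightarrow> 'a::comm_monoid_mult"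
  assumes "i \<noteq> j" "\<And>\<rho>. \<rho> \<notin> {i, j} \<Longrightarrow> f \<rho> = 1"
  shows "prod f UNIV = f i * f j"
proof -
  have "prod f UNIV = prod f {i, j}"
    by (rule prod.mono_neutral_right) (use assms in auto)
  then show ?thesis
    using assms by simp
qed

lemma plane_matrix_mult_vec:
  fixes F :: "'d::finite \<Rightarrow> real"
  assumes ij: "i \<noteq> j"
  shows "(\<Sum>\<sigma>\<in>UNIV. plane_matrix i j a b c e $ \<rho> $ \<sigma> * F \<sigma>) =
    (if \<rho> = i then a * F i + b * F j else if \<rho> = j then c * F i + e * F j else F \<rho>)"
proof -
  consider "\<rho> = i" | "\<rho> = j" | "\<rho> \<noteq> i" "\<rho> \<noteq> j"
    by blast
  then show ?thesis
  proof cases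
    case 1
    then show ?thesis
      using ij by (subst sum_UNIV_two[OF ij]) (auto simp: plane_matrix_nth)
  next
    case 2
    then show ?thesis
      using ij by (subst sum_UNIV_two[OF ij]) (auto simp: plane_matrix_nth)
  next
    case 3
    then show ?thesis
      by (simp add: plane_matrix_nth if_distrib[where f = "\<lambda>x. x * _"] cong: if_cong)
  qed
qed

lemma plane_matrix_diagonal_permutation:
  fixes i j :: "'d::finite"
  assumes ij: "i \<noteq> j" and p: "p permutes UNIV"
    and nz: "\<And>k. plane_matrix i j a b c e $ k $ p k \<noteq> 0"
  shows "p = id \<or> p = Transposition.transpose i j"
proof -
  have fix_other: "p k = k" if "k \<noteq> i" "k \<noteq> j" for k
    using nz[of k] that by (auto simp: plane_matrix_nth split: if_splits)
  have "p i = i \<or> p i = j" "p j = i \<or> p j = j"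
    using nz[of i] nz[of j] ij by (auto simp: plane_matrix_nth split: if_splits)
  moreover have "p i \<noteq> p j"
    using permutes_inj[OF p] ij by (auto dest: injD)
  ultimately consider "p i = i" "p j = j" | "p i = j" "p j = i"
    by auto
  then show ?thesis
  proof cases
    case 1
    have "p k = k" for k
      using fix_other[of k] 1 by (cases "k = i"; cases "k = j") auto
    then show ?thesis
      by auto
  next
    case 2
    have "p k = Transposition.transpose i j k" for k
      using fix_other[of k] 2 ij by (cases "k = i"; cases "k = j") auto
    then show ?thesis
      by auto
  qed
qed

lemma det_plane_matrix:
  fixes i j :: "'d::finite"
  assumes ij: "i \<noteq> j"
  shows "det (plane_matrix i j a b c e) = a * e - b * c"
proof -
  let ?A = "plane_matrix i j a b c e"
  let ?T = "Transposition.transpose i j"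
  let ?f = "\<lambda>p. of_int (sign p) * (\<Prod>k\<in>UNIV. ?A $ k $ p k)"
  have vanish: "?f p = 0" if "p \<in> {p. p permutes UNIV} - {id, ?T}" for p
    using that plane_matrix_diagonal_permutation[OF ij, of p a b c e] by (auto simp: prod_zero)
  have "?T \<noteq> id"
    using ij by (metis id_apply transpose_apply_first)
  have "det ?A = sum ?f {p. p permutes UNIV}"
    by (simp add: det_def)
  also have "\<dots> = sum ?f {id, ?T}"
    by (rule sum.mono_neutral_right) (auto simp: permutes_swap_id finite_permutations vanish)
  also have "\<dots> = ?f id + ?f ?T"
    using \<open>?T \<noteq> id\<close> by (simp add: eq_commute[of id])
  also have "?f id = a * e"
    by (simp, subst prod_UNIV_two[OF ij]) (use ij in \<open>auto simp: plane_matrix_nth\<close>)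
  also have "?f ?T = - (b * c)"
    by (simp add: sign_swap_id ij, subst prod_UNIV_two[OF ij]) (use ij in \<open>auto simp: plane_matrix_nth\<close>)
  finally show ?thesis
    by simp
qed

lemma plane_matrix_preserves_mink:
  fixes t i j :: "'d::finite"
  assumes ij: "i \<noteq> j"
    and "a * a * mink t i i + c * c * mink t j j = mink t i i"
    and "a * b * mink t i i + c * e * mink t j j = 0"
    and "b * b * mink t i i + e * e * mink t j j = mink t j j"
  shows "(\<Sum>\<rho>\<in>UNIV. plane_matrix i j a b c e $ \<rho> $ \<mu> * mink t \<rho> \<rho> * plane_matrix i j a b c e $ \<rho> $ \<nu>)
    = mink t \<mu> \<nu>"
proof -
  let ?F = "\<lambda>\<rho>. plane_matrix i j a b c e $ \<rho> $ \<mu> * mink t \<rho> \<rho> * plane_matrix i j a b c e $ \<rho> $ \<nu>"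
  have "sum ?F UNIV = ?F i + ?F j + sum ?F (UNIV - {i, j})"
    using sum.subset_diff[of "{i, j}" UNIV ?F] ij by (simp add: add.commute)
  also have "sum ?F (UNIV - {i, j}) = (\<Sum>\<rho>\<in>UNIV - {i, j}. if \<rho> = \<mu> then (if \<mu> = \<nu> then mink t \<mu> \<mu> else 0) else 0)"
    by (rule sum.cong) (auto simp: plane_matrix_nth)
  also have "\<dots> = (if \<mu> = \<nu> \<and> \<mu> \<notin> {i, j} then mink t \<mu> \<mu> else 0)"
    by (simp add: sum.delta)
  finally show ?thesis
    using assms by (auto simp: plane_matrix_nth mink_def algebra_simps)
qed

lemma plane_matrix_in_lorentz:
  fixes t i j :: "'d::finite"
  assumes ij: "i \<noteq> j"
    and "a * a * mink t i i + c * c * mink t j j = mink t i i"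
    and "a * b * mink t i i + c * e * mink t j j = 0"
    and "b * b * mink t i i + e * e * mink t j j = mink t j j"
    and "a * e - b * c = 1" "plane_matrix i j a b c e $ t $ t \<ge> 1"
  shows "plane_matrix i j a b c e \<in> lorentz t"
  using assms by (simp add: lorentz_def det_plane_matrix plane_matrix_preserves_mink)

lemma plane_rotation_in_lorentz:
  fixes t i j :: "'d::finite"
  assumes "i \<noteq> j" "i \<noteq> t" "j \<noteq> t"
  shows "plane_matrix i j 0 1 (-1) 0 \<in> lorentz t"
  by (rule plane_matrix_in_lorentz) (use assms in \<open>simp_all add: mink_def plane_matrix_nth\<close>)

(* The boost of rapidity ln 2 in the (t, i)-plane: cosh = 5/4, sinh = 3/4. *)
lemma plane_boost_in_lorentz:
  fixes t i :: "'d::finite"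
  assumes "i \<noteq> t"
  shows "plane_matrix t i (5/4) (3/4) (3/4) (5/4) \<in> lorentz t"
  by (rule plane_matrix_in_lorentz) (use assms in \<open>simp_all add: mink_def plane_matrix_nth\<close>)

section \<open>The Lorentz action on linear fields\<close>

lemma subst_add: "subst f (p + q) = subst f p + subst f q"
  unfolding subst_def by (rule sum_keys_add) (auto simp: smult_add_left)

lemma subst_sum: "subst f (\<Sum>i\<in>I. g i) = (\<Sum>i\<in>I. subst f (g i))"
  by (induction I rule: infinite_finite_induct) (simp_all add: subst_add subst_def[of _ 0])

lemma subst_smult: "subst f (smult c p) = smult c (subst f p)"
proof -
  have "Poly_Mapping.keys (smult c p) \<subseteq> Poly_Mapping.keys p"
    by (auto simp: in_keys_iff lookup_smult)
  then have "subst f (smult c p) = (\<Sum>n\<in>Poly_Mapping.keys p. smult (Poly_Mapping.lookup (smult c p) n)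
      (\<Prod>v\<in>Poly_Mapping.keys n. f v ^ Poly_Mapping.lookup n v))"
    unfolding subst_def by (rule sum_keys_mono_neutral[rotated]) auto
  then show ?thesis
    by (simp add: subst_def smult_sum_right lookup_smult smult_smult)
qed

lemma subst_lin_term: "subst f (lin_term a c) = smult c (f a)"
  unfolding subst_def lin_term_def by (subst sum_keys_single) auto

lemma sym_to_field_add: "sym_to_field (p + q) = sym_to_field p + sym_to_field q"
  unfolding sym_to_field_def by (rule sum_keys_add) (auto simp: smult_add_left)

lemma sym_to_field_sum: "sym_to_field (\<Sum>i\<in>I. g i) = (\<Sum>i\<in>I. sym_to_field (g i))"
  by (induction I rule: infinite_finite_induct) (simp_all add: sym_to_field_add sym_to_field_def[of 0])

lemma sym_to_field_single: "sym_to_field (Poly_Mapping.single b c) = lin_term (Poly_Mapping.lookup b) c"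
  unfolding sym_to_field_def by (subst sum_keys_single) (auto simp: dphi_eq_lin_term smult_lin_term)

lemma lact_add: "lact L (p + q) = lact L p + lact L q"
  by (simp add: lact_def subst_add)

lemma lact_sum: "lact L (\<Sum>i\<in>I. g i) = (\<Sum>i\<in>I. lact L (g i))"
  by (simp add: lact_def subst_sum)

lemma lact_smult: "lact L (smult c p) = smult c (lact L p)"
  by (simp add: lact_def subst_smult)

lemma lact_lin_term: "lact L (lin_term a c) = smult c (sym_to_field (lgen_sym L a))"
  by (simp add: lact_def subst_lin_term)

lemma lact_dphi0: "lact (L :: real^'d::finite^'d) (lin_term mi0 c) = lin_term mi0 c"
proof -
  have "lgen_sym L mi0 = 1"
    by (simp add: lgen_sym_def mi0_def)
  moreover have "sym_to_field (1 :: ('d \<Rightarrow>\<^sub>0 nat) \<Rightarrow>\<^sub>0 real) = lin_term mi0 1"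
    using sym_to_field_single[of "0 :: 'd \<Rightarrow>\<^sub>0 nat" 1] by (simp add: mi0_def lookup_zero[abs_def])
  ultimately show ?thesis
    by (simp add: lact_lin_term sym_to_field_single smult_lin_term)
qed

lemma lookup_single_add_single:
  "Poly_Mapping.lookup (Poly_Mapping.single \<sigma> 1 + Poly_Mapping.single \<tau> 1) = mi2 \<sigma> \<tau>"
  by (auto simp: fun_eq_iff lookup_add lookup_single when_def mi2_def miadd_def mi0_def emi_def)

lemma lact_mi2:
  fixes L :: "real^'d::finite^'d"
  shows "lact L (lin_term (mi2 \<mu> \<nu>) c) =
   (\<Sum>\<sigma>\<in>UNIV. \<Sum>\<tau>\<in>UNIV. lin_term (mi2 \<sigma> \<tau>) (c * (L $ \<mu> $ \<sigma> * L $ \<nu> $ \<tau>)))"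
proof -
  define Y :: "'d \<Rightarrow> ('d \<Rightarrow>\<^sub>0 nat) \<Rightarrow>\<^sub>0 real"
    where "Y \<mu> = (\<Sum>\<nu>\<in>UNIV. Poly_Mapping.single (Poly_Mapping.single \<nu> 1) (L $ \<mu> $ \<nu>))" for \<mu>
  have "lgen_sym L (mi2 \<mu> \<nu>) = (\<Prod>\<rho>\<in>UNIV. (if \<rho> = \<nu> then Y \<rho> else 1) * (if \<rho> = \<mu> then Y \<rho> else 1))"
    unfolding lgen_sym_def
    by (rule prod.cong) (auto simp: mi2_def miadd_def mi0_def emi_def power_add Y_def monom1_def smult_def)
  also have "\<dots> = Y \<nu> * Y \<mu>"
    by (simp add: prod.distrib)
  also have "\<dots> = (\<Sum>\<tau>\<in>UNIV. \<Sum>\<sigma>\<in>UNIV.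
      Poly_Mapping.single (Poly_Mapping.single \<tau> 1 + Poly_Mapping.single \<sigma> 1) (L $ \<nu> $ \<tau> * L $ \<mu> $ \<sigma>))"
    by (simp add: Y_def sum_product mult_single)
  finally have "sym_to_field (lgen_sym L (mi2 \<mu> \<nu>)) =
      (\<Sum>\<tau>\<in>UNIV. \<Sum>\<sigma>\<in>UNIV. lin_term (mi2 \<tau> \<sigma>) (L $ \<nu> $ \<tau> * L $ \<mu> $ \<sigma>))"
    by (simp add: sym_to_field_sum sym_to_field_single lookup_single_add_single[unfolded One_nat_def])
  also have "\<dots> = (\<Sum>\<sigma>\<in>UNIV. \<Sum>\<tau>\<in>UNIV. lin_term (mi2 \<sigma> \<tau>) (L $ \<mu> $ \<sigma> * L $ \<nu> $ \<tau>))"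
    by (subst sum.swap) (simp add: mi2_commute mult.commute)
  finally show ?thesis
    by (simp add: lact_lin_term smult_sum_right smult_lin_term)
qed

lemma lact_KG:
  fixes t :: "'d::finite"
  assumes L: "L \<in> lorentz t"
  shows "lact L (KG t m) = KG t m"
proof -
  have metric: "(\<Sum>\<rho>\<in>UNIV. mink t \<rho> \<rho> * (L $ \<rho> $ \<sigma> * L $ \<rho> $ \<tau>)) = mink t \<sigma> \<tau>" for \<sigma> \<tau>
  proof -
    have "(\<Sum>\<rho>\<in>UNIV. L $ \<rho> $ \<sigma> * mink t \<rho> \<rho> * L $ \<rho> $ \<tau>) = mink t \<sigma> \<tau>"
      using L by (simp add: lorentz_def)
    then show ?thesis
      by (simp add: algebra_simps)
  qed
  have "lact L (\<Sum>\<rho>\<in>UNIV. lin_term (mi2 \<rho> \<rho>) (mink t \<rho> \<rho>)) =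
     (\<Sum>\<sigma>\<in>UNIV. \<Sum>\<tau>\<in>UNIV. \<Sum>\<rho>\<in>UNIV. lin_term (mi2 \<sigma> \<tau>) (mink t \<rho> \<rho> * (L $ \<rho> $ \<sigma> * L $ \<rho> $ \<tau>)))"
    by (simp add: lact_sum lact_mi2) (subst sum.swap, subst (2) sum.swap, rule refl)
  also have "\<dots> = (\<Sum>\<sigma>\<in>UNIV. \<Sum>\<tau>\<in>UNIV. lin_term (mi2 \<sigma> \<tau>) (mink t \<sigma> \<tau>))"
    by (simp add: lin_term_sum[symmetric] metric)
  also have "\<dots> = (\<Sum>\<sigma>\<in>UNIV. lin_term (mi2 \<sigma> \<sigma>) (mink t \<sigma> \<sigma>))"
  proof (rule sum.cong[OF refl])
    fix \<sigma>
    have "(\<Sum>\<tau>\<in>UNIV. lin_term (mi2 \<sigma> \<tau>) (mink t \<sigma> \<tau>)) =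
        (\<Sum>\<tau>\<in>UNIV. if \<tau> = \<sigma> then lin_term (mi2 \<sigma> \<sigma>) (mink t \<sigma> \<sigma>) else 0)"
      by (rule sum.cong) (auto simp: mink_def)
    then show "(\<Sum>\<tau>\<in>UNIV. lin_term (mi2 \<sigma> \<tau>) (mink t \<sigma> \<tau>)) = lin_term (mi2 \<sigma> \<sigma>) (mink t \<sigma> \<sigma>)"
      by simp
  qed
  finally show ?thesis
    by (simp add: KG_eq_lin_terms lact_add lact_dphi0)
qed

section \<open>Sections of the projection onto on-shell fields\<close>

lemma mdim_single_one:
  fixes a :: "'d::finite mi"
  shows "mdim (Poly_Mapping.single a 1) = (real CARD('d) - 2) / 2 + real (mi_order a)"
  by (simp add: mdim_def mdim_mi_def mi_order_def)

lemma exists_third_index: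
  fixes t i :: "'d::finite"
  assumes "CARD('d) > 2"
  obtains j where "j \<noteq> t" "j \<noteq> i"
proof -
  have "\<not> UNIV \<subseteq> {t, i}"
  proof
    assume "UNIV \<subseteq> {t, i}"
    then have "CARD('d) \<le> card {t, i}"
      by (rule card_mono[rotated]) simp
    also have "\<dots> \<le> 2"
      by (simp add: card_insert_le_m1)
    finally show False
      using assms by simp
  qed
  then show ?thesis
    using that by blast
qed

locale onshell_section =
  fixes t :: "'d::finite" and m :: real and \<sigma> :: "'d fld set \<Rightarrow> 'd fld"
  assumes dim: "CARD('d) > 2"
    and sec: "\<forall>X\<in>carrier (P0 t m). proj t m (\<sigma> X) = X"
    and hom: "\<sigma> \<in> ring_hom (P0 t m) PR"
    and lin: "\<forall>c p. \<sigma> (proj t m (smult c p)) = smult c (\<sigma> (proj t m p))"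
    and lor: "\<forall>L\<in>lorentz t. \<forall>p. \<sigma> (proj t m (lact L p)) = lact L (\<sigma> (proj t m p))"
    and P1: "\<forall>p\<in>P1. \<sigma> (proj t m p) \<in> P1"
    and mdim: "\<forall>p D. (\<forall>n\<in>Poly_Mapping.keys p. mdim n \<le> D)
                 \<longrightarrow> (\<forall>n\<in>Poly_Mapping.keys (\<sigma> (proj t m p)). mdim n \<le> D)"
begin

definition sp :: "'d fld \<Rightarrow> 'd fld" where
  "sp p = \<sigma> (proj t m p)"

lemma sp_ring_hom: "sp \<in> ring_hom PR PR"
proof -
  interpret I: ideal "Jid t m" PR by (rule ideal_Jid)
  have "(\<lambda>p. Jid t m +>\<^bsub>PR\<^esub> p) \<in> ring_hom PR (P0 t m)"
    using I.rcos_ring_hom unfolding P0_def Jid_def by simp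
  from ring_hom_trans[OF this hom] show ?thesis
    unfolding sp_def[abs_def] proj_def comp_def .
qed

lemma sp_add: "sp (p + q) = sp p + sp q"
  using ring_hom_add[OF sp_ring_hom, of p q] by (simp add: PR_def)

lemma sp_zero: "sp 0 = 0"
  using sp_add[of 0 0] by simp

lemma sp_sum: "sp (\<Sum>i\<in>I. f i) = (\<Sum>i\<in>I. sp (f i))"
  by (induction I rule: infinite_finite_induct) (auto simp: sp_add sp_zero)

lemma sp_smult: "sp (smult c p) = smult c (sp p)"
  using lin by (simp add: sp_def)

lemma sp_Jid: "p \<in> Jid t m \<Longrightarrow> sp p = 0"
proof -
  assume p: "p \<in> Jid t m"
  interpret I: ideal "Jid t m" PR by (rule ideal_Jid)
  have "0 \<in> Jid t m"
    using I.additive_subgroup_axioms additive_subgroup.zero_closed by (fastforce simp: PR_def)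
  then have "proj t m p = proj t m 0"
    using p unfolding proj_def by (simp add: I.a_rcos_const)
  then show ?thesis
    using sp_zero by (simp add: sp_def)
qed

lemma sp_minus_in_Jid: "sp p - p \<in> Jid t m"
proof -
  interpret I: ideal "Jid t m" PR by (rule ideal_Jid)
  have "proj t m p \<in> carrier (P0 t m)"
    using ring_hom_closed[OF I.rcos_ring_hom, of p]
    unfolding P0_def Jid_def proj_def by (simp add: PR_def)
  then have "Jid t m +>\<^bsub>PR\<^esub> sp p = Jid t m +>\<^bsub>PR\<^esub> p"
    using sec by (simp add: sp_def proj_def)
  moreover have "sp p \<in> Jid t m +>\<^bsub>PR\<^esub> sp p"
    by (rule I.a_rcos_self) (simp add: PR_def)
  ultimately obtain h where "h \<in> Jid t m" "sp p = h + p"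
    by (auto simp: a_r_coset_def' PR_def)
  then show ?thesis
    by simp
qed

lemma sp_lin_term_order_le:
  assumes "mi_order a \<le> 2"
  shows "sp (lin_term a 1) \<in> P1_le2"
    and "lin_coeff (sp (lin_term a 1)) b \<noteq> 0 \<Longrightarrow> mi_order b \<le> mi_order a"
proof -
  let ?q = "sp (lin_term a 1)"
  have q1: "?q \<in> P1"
    using P1 P1_lin_term[of a 1] by (simp add: sp_def)
  have "\<forall>n\<in>Poly_Mapping.keys (lin_term a 1). mdim n \<le> mdim (Poly_Mapping.single a 1)"
    by (simp add: lin_term_def)
  then have bound: "\<forall>n\<in>Poly_Mapping.keys ?q. mdim n \<le> mdim (Poly_Mapping.single a 1)"
    using mdim by (simp add: sp_def)
  have keys: "\<exists>b. n = Poly_Mapping.single b 1 \<and> mi_order b \<le> mi_order a"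
    if n: "n \<in> Poly_Mapping.keys ?q" for n
  proof -
    obtain b where b: "n = Poly_Mapping.single b 1"
      using q1 n by (auto simp: P1_def)
    then have "mdim (Poly_Mapping.single b 1) \<le> mdim (Poly_Mapping.single a 1)"
      using bound n by simp
    then show ?thesis
      using b by (simp only: mdim_single_one) auto
  qed
  show "?q \<in> P1_le2"
    unfolding P1_le2_def using keys assms by fastforce
  assume "lin_coeff ?q b \<noteq> 0"
  then show "mi_order b \<le> mi_order a"
    using keys[of "Poly_Mapping.single b 1"] by (simp add: lin_coeff_def in_keys_iff)
qed

(* Read off at d^t d^t phi, where (box + m^2) phi has coefficient 1. *)
definition kg_coeff :: "'d mi \<Rightarrow> real" where
  "kg_coeff a = lin_coeff (sp (lin_term a 1) - lin_term a 1) (mi2 t t)"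

lemma sp_lin_term:
  assumes "mi_order a \<le> 2"
  shows "sp (lin_term a c) = lin_term a c + smult (c * kg_coeff a) (KG t m)"
proof -
  have "sp (lin_term a 1) - lin_term a 1 \<in> P1_le2"
    using sp_lin_term_order_le(1)[OF assms] P1_le2_lin_term[OF assms] by (rule P1_le2_diff)
  then have "sp (lin_term a 1) = lin_term a 1 + smult (kg_coeff a) (KG t m)"
    using P1_le2_Jid_eq_smult_KG[OF dim _ sp_minus_in_Jid] by (simp add: kg_coeff_def algebra_simps)
  then show ?thesis
    using sp_smult[of c "lin_term a 1"] by (simp add: smult_lin_term smult_add_right smult_smult)
qed

lemma kg_coeff_eq_0:
  assumes "mi_order a < 2"
  shows "kg_coeff a = 0"
proof -
  have "lin_coeff (sp (lin_term a 1)) (mi2 t t) = 0"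
    using sp_lin_term_order_le(2)[of a "mi2 t t"] assms by auto
  moreover have "a \<noteq> mi2 t t"
    using assms by auto
  ultimately show ?thesis
    by (simp add: kg_coeff_def lin_coeff_diff lin_coeff_lin_term)
qed

end

context onshell_section
begin

abbreviation kg2 :: "'d \<Rightarrow> 'd \<Rightarrow> real" where
  "kg2 \<mu> \<nu> \<equiv> kg_coeff (mi2 \<mu> \<nu>)"

lemma sp_dphi0: "sp (lin_term mi0 c) = lin_term mi0 c"
  using sp_lin_term[of mi0 c] kg_coeff_eq_0[of mi0] by simp

lemma sp_mi1: "sp (lin_term (mi1 \<mu>) c) = lin_term (mi1 \<mu>) c"
  using sp_lin_term[of "mi1 \<mu>" c] kg_coeff_eq_0[of "mi1 \<mu>"] by simp

lemma sp_mi2: "sp (lin_term (mi2 \<mu> \<nu>) c) = lin_term (mi2 \<mu> \<nu>) c + smult (c * kg2 \<mu> \<nu>) (KG t m)"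
  by (simp add: sp_lin_term)

lemma kg2_commute: "kg2 \<mu> \<nu> = kg2 \<nu> \<mu>"
  by (simp add: mi2_commute)

(* This is sigma pi ((box + m^2) phi) = 0. *)
lemma kg2_trace: "(\<Sum>\<mu>\<in>UNIV. mink t \<mu> \<mu> * kg2 \<mu> \<mu>) = -1"
proof -
  have "sp (KG t m) = (\<Sum>\<mu>\<in>UNIV. lin_term (mi2 \<mu> \<mu>) (mink t \<mu> \<mu>) + smult (mink t \<mu> \<mu> * kg2 \<mu> \<mu>) (KG t m))
      + lin_term mi0 (m\<^sup>2)"
    by (subst (1) KG_eq_lin_terms) (simp add: sp_add sp_sum sp_mi2 sp_dphi0)
  then have "lin_coeff (sp (KG t m)) (mi2 t t) = 1 + (\<Sum>\<mu>\<in>UNIV. mink t \<mu> \<mu> * kg2 \<mu> \<mu>)"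
    by (simp add: lin_coeff_add lin_coeff_sum lin_coeff_lin_term lin_coeff_smult lin_coeff_KG
        mi2_diag_eq_iff mi2_neq_mi0 sum.distrib) (simp add: mink_def)
  moreover have "sp (KG t m) = 0"
    by (rule sp_Jid[OF KG_in_Jid])
  ultimately show ?thesis
    by (simp add: lin_coeff_def)
qed

lemma kg2_lorentz_invariant:
  assumes L: "L \<in> lorentz t"
  shows "kg2 \<mu> \<nu> = (\<Sum>\<sigma>\<in>UNIV. L $ \<mu> $ \<sigma> * (\<Sum>\<tau>\<in>UNIV. L $ \<nu> $ \<tau> * kg2 \<sigma> \<tau>))"
proof -
  let ?X = "lin_term (mi2 \<mu> \<nu>) 1"
  let ?S = "\<Sum>\<sigma>\<in>UNIV. \<Sum>\<tau>\<in>UNIV. L $ \<mu> $ \<sigma> * L $ \<nu> $ \<tau> * kg2 \<sigma> \<tau>"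
  have "sp (lact L ?X) = (\<Sum>\<sigma>\<in>UNIV. \<Sum>\<tau>\<in>UNIV. sp (lin_term (mi2 \<sigma> \<tau>) (L $ \<mu> $ \<sigma> * L $ \<nu> $ \<tau>)))"
    by (simp add: lact_mi2 sp_sum)
  also have "\<dots> = lact L ?X + smult ?S (KG t m)"
    by (simp add: sp_mi2 lact_mi2 sum.distrib smult_sum_left)
  finally have "sp (lact L ?X) = lact L ?X + smult ?S (KG t m)" .
  moreover have "sp (lact L ?X) = lact L ?X + smult (kg2 \<mu> \<nu>) (KG t m)"
    using lor L by (simp add: sp_def[symmetric] sp_mi2 lact_add lact_smult lact_KG)
  ultimately have "smult ?S (KG t m) = smult (kg2 \<mu> \<nu>) (KG t m)"
    by simp
  then have "lin_coeff (smult ?S (KG t m)) (mi2 t t) = lin_coeff (smult (kg2 \<mu> \<nu>) (KG t m)) (mi2 t t)"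
    by simp
  then show ?thesis
    by (simp add: lin_coeff_smult lin_coeff_KG mink_def sum_distrib_left mult.assoc)
qed

lemma kg2_time_space:
  assumes "i \<noteq> t"
  shows "kg2 t i = 0"
proof -
  obtain j where j: "j \<noteq> t" "j \<noteq> i"
    using exists_third_index[OF dim] .
  then have ij: "i \<noteq> j"
    by auto
  let ?R = "plane_matrix i j 0 1 (-1) 0"
  have R: "?R \<in> lorentz t"
    using plane_rotation_in_lorentz[OF ij assms j(1)] .
  have "kg2 t i = kg2 t j" "kg2 t j = - kg2 t i"
    using kg2_lorentz_invariant[OF R, of t i] kg2_lorentz_invariant[OF R, of t j] ij assms j
    by (simp_all add: plane_matrix_mult_vec[OF ij] sum_negf)
  then show ?thesis
    by simp
qed

lemma kg2_space_space:
  assumes "i \<noteq> t" "j \<noteq> t" "i \<noteq> j"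
  shows "kg2 i j = 0"
proof -
  have "plane_matrix i j 0 1 (-1) 0 \<in> lorentz t"
    using plane_rotation_in_lorentz[OF assms(3,1,2)] .
  from kg2_lorentz_invariant[OF this, of i j] have "kg2 i j = - kg2 j i"
    using assms by (simp add: plane_matrix_mult_vec[OF assms(3)] sum_negf)
  then show ?thesis
    using kg2_commute[of i j] by simp
qed

lemma kg2_diag:
  assumes "i \<noteq> t"
  shows "kg2 i i = - kg2 t t"
proof -
  have ti: "t \<noteq> i"
    using assms by auto
  have "plane_matrix t i (5/4) (3/4) (3/4) (5/4) \<in> lorentz t"
    using plane_boost_in_lorentz[OF assms] .
  from kg2_lorentz_invariant[OF this, of t t]
  have "kg2 t t = 5/4 * (5/4 * kg2 t t + 3/4 * kg2 t i) + 3/4 * (5/4 * kg2 i t + 3/4 * kg2 i i)"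
    using ti by (simp add: plane_matrix_mult_vec[OF ti])
  moreover have "kg2 t i = 0" "kg2 i t = 0"
    using kg2_time_space[OF assms] kg2_commute[of i t] by auto
  ultimately show ?thesis
    by simp
qed

lemma kg2_eq: "kg2 \<mu> \<nu> = - (mink t \<mu> \<nu> / real CARD('d))"
proof -
  have "(\<Sum>\<mu>\<in>UNIV. mink t \<mu> \<mu> * kg2 \<mu> \<mu>) = (\<Sum>\<mu>\<in>(UNIV::'d set). kg2 t t)"
    by (rule sum.cong) (auto simp: mink_def kg2_diag)
  then have "real CARD('d) * kg2 t t = -1"
    using kg2_trace by simp
  then have tt: "kg2 t t = - 1 / real CARD('d)"
    using dim by (simp add: field_simps)
  consider "\<mu> = \<nu>" | "\<mu> \<noteq> \<nu>" "\<mu> = t \<or> \<nu> = t" | "\<mu> \<noteq> \<nu>" "\<mu> \<noteq> t" "\<nu> \<noteq> t"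
    by blast
  then show ?thesis
  proof cases
    case 1
    then show ?thesis
      using tt kg2_diag[of \<mu>] by (cases "\<mu> = t") (auto simp: mink_def)
  next
    case 2
    then show ?thesis
      using kg2_time_space[of \<mu>] kg2_time_space[of \<nu>] kg2_commute[of \<mu> \<nu>] by (auto simp: mink_def)
  next
    case 3
    then show ?thesis
      by (simp add: kg2_space_space mink_def)
  qed
qed

end

theorem mainTheorem8:
  fixes t :: "'d::finite" and m :: real and \<sigma> :: "'d fld set \<Rightarrow> 'd fld"
  assumes dim: "CARD('d) > 2"
    and sec: "\<forall>X\<in>carrier (P0 t m). proj t m (\<sigma> X) = X"
    and hom: "\<sigma> \<in> ring_hom (P0 t m) PR"
    and lin: "\<forall>c p. \<sigma> (proj t m (smult c p)) = smult c (\<sigma> (proj t m p))"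
    and lor: "\<forall>L\<in>lorentz t. \<forall>p. \<sigma> (proj t m (lact L p)) = lact L (\<sigma> (proj t m p))"
    and P1: "\<forall>p\<in>P1. \<sigma> (proj t m p) \<in> P1"
    and mdim: "\<forall>p D. (\<forall>n\<in>Poly_Mapping.keys p. mdim n \<le> D)
                 \<longrightarrow> (\<forall>n\<in>Poly_Mapping.keys (\<sigma> (proj t m p)). mdim n \<le> D)"
  shows "\<sigma> (proj t m (dphi mi0)) = dphi mi0
    \<and> (\<forall>\<mu>. \<sigma> (proj t m (pd \<mu> (dphi mi0))) = pd \<mu> (dphi mi0))
    \<and> (\<forall>\<mu> \<nu>. \<sigma> (proj t m (pd \<mu> (pd \<nu> (dphi mi0))))
            = pd \<mu> (pd \<nu> (dphi mi0)) - smult (mink t \<mu> \<nu> / real CARD('d)) (KG t m))"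
proof -
  interpret onshell_section t m \<sigma>
    using assms by unfold_locales
  show ?thesis
  proof (intro conjI allI)
    show "\<sigma> (proj t m (dphi mi0)) = dphi mi0"
      using sp_dphi0[of 1] by (simp add: sp_def dphi_eq_lin_term)
    show "\<sigma> (proj t m (pd \<mu> (dphi mi0))) = pd \<mu> (dphi mi0)" for \<mu>
      using sp_mi1[of \<mu> 1] by (simp add: sp_def pd_dphi0)
    show "\<sigma> (proj t m (pd \<mu> (pd \<nu> (dphi mi0))))
        = pd \<mu> (pd \<nu> (dphi mi0)) - smult (mink t \<mu> \<nu> / real CARD('d)) (KG t m)" for \<mu> \<nu>
      using sp_mi2[of \<mu> \<nu> 1] by (simp add: sp_def pd_pd_dphi0 kg2_eq smult_minus_left)
  qed
qed

end
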